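(* In the slotted $N$-queue system described in the context, the Longest Expected Queue (LEQ) policy stabilizes every arrival rate vector in $$\Lambda_{LEQ}=\Big\{\boldsymbol\lambda\in\mathbb{R}^N_+ : \sum_{i=1}^N\lambda_i<1 \text{ and } \min_{1\le i\le N}\lambda_i>0\Big\},$$ i.e., for every $\boldsymbol\lambda\in\Lambda_{LEQ}$ the system operated under LEQ is stable.
   Context: There are $N$ queues $I=\{1,\dots,N\}$ sharing a single server in slotted time $t=0,1,\dots$. Arrivals $A_j(t)\in\{0,1\}$ to queue $j$ at slot boundary $t$ are i.i.d. Bernoulli($\lambda_j$), independent across queues. In each slot at most one queue is scheduled, and a scheduled nonempty queue transmits exactly one packet; backlogs evolve as $Q_j(t+1)=(Q_j(t)-D_j(t))^++A_j(t+1)$, $Q_j(0)=A_j(0)$, where $D_j(t)\in\{0,1\}$ is the departure from queue $j$ in slot $t$. $V_i(t)$ denotes the number of slots since queue $i$ was last scheduled. The LEQ policy serves the queue scheduled in the previous slot (the incumbent) exhaustively, i.e., it keeps scheduling it as long as it is nonempty; whenever the incumbent is found empty at the beginning of a slot, it schedules in that slot the queue $\arg\max_{1\le i\le N}\lambda_iV_i(t)$ (if that queue is empty the slot carries no packet). The system is stable if the Markov chain describing the system backlog is positive recurrent. *)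

theory Defs
  imports "HOL-Probability.Probability"
begin

fun first_passage :: "('s \<Rightarrow> 's pmf) \<Rightarrow> 's set \<Rightarrow> nat \<Rightarrow> 's \<Rightarrow> real" where
  "first_passage K S 0 x = 0"
| "first_passage K S (Suc 0) x = measure_pmf.prob (K x) S"
| "first_passage K S (Suc (Suc n)) x =
     measure_pmf.expectation (K x) (\<lambda>y. if y \<in> S then 0 else first_passage K S (Suc n) y)"

definition positive_recurrent_state :: "('s \<Rightarrow> 's pmf) \<Rightarrow> 's \<Rightarrow> bool" where
  "positive_recurrent_state K s \<longleftrightarrow>
     (\<lambda>n. first_passage K {s} n s) sums 1 \<and>
     summable (\<lambda>n. real n * first_passage K {s} n s)"

inductive reachable :: "'s pmf \<Rightarrow> ('s \<Rightarrow> 's pmf) \<Rightarrow> 's \<Rightarrow> bool" for init K where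
  init: "x \<in> set_pmf init \<Longrightarrow> reachable init K x"
| step: "reachable init K x \<Longrightarrow> y \<in> set_pmf (K x) \<Longrightarrow> reachable init K y"

text \<open>Positive recurrence of the chain (init, K): from every reachable state
  the chain enters the set of positive recurrent states with probability 1.
  For an irreducible chain this is the usual notion (all states positive
  recurrent); it also tolerates transient start-up states.\<close>
definition positive_recurrent_chain :: "'s pmf \<Rightarrow> ('s \<Rightarrow> 's pmf) \<Rightarrow> bool" where
  "positive_recurrent_chain init K \<longleftrightarrow>
     (\<forall>x. reachable init K x \<longrightarrow>
        (\<lambda>n. first_passage K {y. positive_recurrent_state K y} n x) sums 1)"

text \<open>System state: (Q, V, c) where Q i = backlog of queue i, V i = slots since
  queue i was last scheduled, c = queue scheduled in the previous slot
  (the incumbent; c = 0 means none, i.e. at t = 0). Queues are 1..N;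
  components outside 1..N are kept at 0.\<close>
type_synonym qstate = "(nat \<Rightarrow> nat) \<times> (nat \<Rightarrow> nat) \<times> nat"

definition leq_argmax :: "nat \<Rightarrow> (nat \<Rightarrow> real) \<Rightarrow> (nat \<Rightarrow> nat) \<Rightarrow> nat" where
  "leq_argmax N lam V =
     (LEAST i. i \<in> {1..N} \<and> (\<forall>j\<in>{1..N}. lam j * real (V j) \<le> lam i * real (V i)))"

definition leq_sched :: "nat \<Rightarrow> (nat \<Rightarrow> real) \<Rightarrow> qstate \<Rightarrow> nat" where
  "leq_sched N lam st = (case st of (Q, V, c) \<Rightarrow>
     if c \<in> {1..N} \<and> Q c > 0 then c else leq_argmax N lam V)"

definition arrivals :: "nat \<Rightarrow> (nat \<Rightarrow> real) \<Rightarrow> (nat \<Rightarrow> bool) pmf" where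
  "arrivals N lam = Pi_pmf {1..N} False (\<lambda>j. bernoulli_pmf (lam j))"

definition leq_kernel :: "nat \<Rightarrow> (nat \<Rightarrow> real) \<Rightarrow> qstate \<Rightarrow> qstate pmf" where
  "leq_kernel N lam st = (case st of (Q, V, c) \<Rightarrow>
     (let s = leq_sched N lam st;
          D = (\<lambda>j. if j = s \<and> Q j > 0 then 1 else 0 :: nat)
      in map_pmf (\<lambda>A.
           ((\<lambda>j. if j \<in> {1..N} then (Q j - D j) + (if A j then 1 else 0) else 0),
            (\<lambda>j. if j \<in> {1..N} then (if j = s then 1 else V j + 1) else 0),
            s))
         (arrivals N lam)))"

definition leq_init :: "nat \<Rightarrow> (nat \<Rightarrow> real) \<Rightarrow> qstate pmf" where
  "leq_init N lam =
     map_pmf (\<lambda>A. ((\<lambda>j. if A j then 1 else 0), (\<lambda>_. 0), 0)) (arrivals N lam)"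

definition leq_stable :: "nat \<Rightarrow> (nat \<Rightarrow> real) \<Rightarrow> bool" where
  "leq_stable N lam \<longleftrightarrow> positive_recurrent_chain (leq_init N lam) (leq_kernel N lam)"

end

theory Submission
  imports Defs
begin

text \<open>Write sigma for the total arrival rate and kappa = (1 - sigma) / 4. LEQ serves its
  incumbent exhaustively, so a queue other than the incumbent was empty when it was last left and
  has since gained at most one packet per slot: Q_j \<le> V_j + 1. Consider the Lyapunov function
  sum_j Q_j + kappa * sum_{j \<noteq> incumbent} (lam_j V_j - Q_j)^+. If the scheduled queue is
  nonempty, one packet leaves while sigma arrive in expectation; if it is empty but lam_s V_s is
  large, the deficit of s leaves the second sum. Either way the expected decrease is at least
  (1 - sigma) / 2, so the drift fails only on the finite set of states in which LEQ serves an
  empty queue of bounded weight lam_s V_s (all V_j are then bounded since min lam > 0).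
  A Foster-Lyapunov argument for kernels with finite support shows that the chain reaches
  this finite set, hence an essential state in it, and that such a state has a finite expected
  return time.\<close>

section \<open>Essential states of a relation\<close>

definition essential :: "('a \<Rightarrow> 'a \<Rightarrow> bool) \<Rightarrow> 'a \<Rightarrow> bool" where
  "essential r z \<longleftrightarrow> (\<forall>x. r\<^sup>+\<^sup>+ z x \<longrightarrow> r\<^sup>+\<^sup>+ x z)"

lemma rtranclp_closed:
  assumes "r\<^sup>*\<^sup>* x y" and "\<And>a b. a \<in> R \<Longrightarrow> r a b \<Longrightarrow> b \<in> R" and "x \<in> R"
  shows "y \<in> R"
  using assms(1,3) by induction (auto intro: assms(2))

text \<open>Take z0 beyond y with the fewest states of F beyond it. Every state of F beyond z0
  then has exactly the same states of F beyond it, including itself, so such a state is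
  reached back from wherever it leads.\<close>
lemma reaches_essential:
  assumes "finite F"
    and closed: "\<And>x y. x \<in> R \<Longrightarrow> r x y \<Longrightarrow> y \<in> R"
    and reaches_F: "\<And>x. x \<in> R \<Longrightarrow> \<exists>w\<in>F. r\<^sup>+\<^sup>+ x w"
    and "y \<in> R"
  shows "\<exists>z\<in>F. essential r z \<and> r\<^sup>+\<^sup>+ y z"
proof -
  define ahead where "ahead x = {w\<in>F. r\<^sup>+\<^sup>+ x w}" for x
  have ahead_mono: "ahead w \<subseteq> ahead x" if "r\<^sup>+\<^sup>+ x w" for x w
    unfolding ahead_def using tranclp_trans[OF that] by blast
  have fin: "finite (ahead x)" for x
    using \<open>finite F\<close> by (simp add: ahead_def)
  have in_R: "x \<in> R" if "r\<^sup>+\<^sup>+ y x" for x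
    using rtranclp_closed[OF tranclp_into_rtranclp[OF that] closed \<open>y \<in> R\<close>] .
  obtain w0 where "w0 \<in> ahead y"
    using reaches_F[OF \<open>y \<in> R\<close>] by (auto simp: ahead_def)
  then obtain z0 where z0: "z0 \<in> ahead y"
    and z0_min: "\<And>w. w \<in> ahead y \<Longrightarrow> card (ahead z0) \<le> card (ahead w)"
    using ex_has_least_nat[of "\<lambda>w. w \<in> ahead y" w0 "\<lambda>w. card (ahead w)"] by blast
  have y_z0: "r\<^sup>+\<^sup>+ y z0" using z0 by (simp add: ahead_def)
  have ahead_eq: "ahead w = ahead z0" if "w \<in> ahead z0" for w
  proof -
    have "r\<^sup>+\<^sup>+ z0 w" using that by (simp add: ahead_def)
    then have sub: "ahead w \<subseteq> ahead z0" and "w \<in> ahead y"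
      using ahead_mono[of z0 w] ahead_mono[OF y_z0] that by auto
    then have "card (ahead w) = card (ahead z0)"
      using z0_min card_mono[OF fin sub] by (simp add: le_antisym)
    then show ?thesis using card_subset_eq[OF fin sub] by simp
  qed
  obtain z where z: "z \<in> F" "r\<^sup>+\<^sup>+ z0 z"
    using reaches_F[OF in_R[OF y_z0]] by blast
  have "essential r z"
    unfolding essential_def
  proof (intro allI impI)
    fix x assume "r\<^sup>+\<^sup>+ z x"
    then have z0_x: "r\<^sup>+\<^sup>+ z0 x" using z(2) by (rule tranclp_trans[rotated])
    then obtain w where w: "w \<in> F" "r\<^sup>+\<^sup>+ x w"
      using reaches_F[OF in_R[OF tranclp_trans[OF y_z0 z0_x]]] by blast
    then have "w \<in> ahead z0" using tranclp_trans[OF z0_x] by (simp add: ahead_def)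
    then have "z \<in> ahead w" using ahead_eq z by (simp add: ahead_def)
    then show "r\<^sup>+\<^sup>+ x z" using tranclp_trans[OF w(2)] by (simp add: ahead_def)
  qed
  then show ?thesis using z tranclp_trans[OF y_z0 z(2)] by blast
qed

section \<open>A Foster-Lyapunov criterion for kernels with finite support\<close>

locale finite_support_kernel =
  fixes K :: "'s \<Rightarrow> 's pmf"
  assumes finite_support: "finite (set_pmf (K x))"
begin

abbreviation edge :: "'s \<Rightarrow> 's \<Rightarrow> bool" where
  "edge x y \<equiv> y \<in> set_pmf (K x)"

definition expect :: "('s \<Rightarrow> real) \<Rightarrow> 's \<Rightarrow> real" where
  "expect f x = (\<Sum>y\<in>set_pmf (K x). pmf (K x) y * f y)"

definition taboo :: "'s set \<Rightarrow> ('s \<Rightarrow> real) \<Rightarrow> 's \<Rightarrow> real" where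
  "taboo S f = expect (\<lambda>y. if y \<in> S then 0 else f y)"

text \<open>avoid_prob S n x is the probability that the chain started in x avoids S at the
  times 1, ..., n, so avoid_time S n x is the expectation of min n T for the hitting time
  T \<ge> 1 of S.\<close>
definition avoid_prob :: "'s set \<Rightarrow> nat \<Rightarrow> 's \<Rightarrow> real" where
  "avoid_prob S n = (taboo S ^^ n) (\<lambda>_. 1)"

definition avoid_time :: "'s set \<Rightarrow> nat \<Rightarrow> 's \<Rightarrow> real" where
  "avoid_time S n x = (\<Sum>k<n. avoid_prob S k x)"

lemma expectation_eq_expect: "measure_pmf.expectation (K x) f = expect f x"
  unfolding expect_def
  by (subst integral_measure_pmf_real[where A="set_pmf (K x)"])
     (auto simp: finite_support mult.commute)

lemma expect_mono: "(\<And>y. edge x y \<Longrightarrow> f y \<le> g y) \<Longrightarrow> expect f x \<le> expect g x"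
  unfolding expect_def by (intro sum_mono mult_left_mono) auto

lemma expect_const [simp]: "expect (\<lambda>_. c) x = c"
  using sum_pmf_eq_1[OF finite_support[of x] order_refl]
  by (simp add: expect_def sum_distrib_right[symmetric])

lemma expect_less_one:
  assumes "\<And>y. edge x y \<Longrightarrow> f y \<le> 1" and "edge x z" and "f z < 1"
  shows "expect f x < 1"
proof -
  have "expect f x < (\<Sum>y\<in>set_pmf (K x). pmf (K x) y * 1)"
    unfolding expect_def
  proof (rule sum_strict_mono_ex1[OF finite_support])
    show "\<forall>y\<in>set_pmf (K x). pmf (K x) y * f y \<le> pmf (K x) y * 1"
      using assms(1) by (auto intro: mult_left_le)
    show "\<exists>y\<in>set_pmf (K x). pmf (K x) y * f y < pmf (K x) y * 1"
      using assms(2,3) by (auto simp: pmf_positive)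
  qed
  then show ?thesis using sum_pmf_eq_1[OF finite_support[of x] order_refl] by simp
qed

lemma taboo_mono:
  "(\<And>y. edge x y \<Longrightarrow> y \<notin> S \<Longrightarrow> f y \<le> g y) \<Longrightarrow> taboo S f x \<le> taboo S g x"
  unfolding taboo_def by (intro expect_mono) auto

lemma taboo_nonneg: "(\<And>y. edge x y \<Longrightarrow> y \<notin> S \<Longrightarrow> 0 \<le> f y) \<Longrightarrow> 0 \<le> taboo S f x"
  unfolding taboo_def expect_def by (auto intro!: sum_nonneg)

lemma taboo_le_expect: "(\<And>y. edge x y \<Longrightarrow> 0 \<le> f y) \<Longrightarrow> taboo S f x \<le> expect f x"
  unfolding taboo_def by (intro expect_mono) auto

lemma taboo_linear: "taboo S (\<lambda>y. f y + c * g y) x = taboo S f x + c * taboo S g x"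
  unfolding taboo_def expect_def sum_distrib_left sum.distrib[symmetric]
  by (intro sum.cong) (auto simp: algebra_simps)

lemma taboo_sum: "taboo S (\<lambda>y. \<Sum>i\<in>I. f i y) x = (\<Sum>i\<in>I. taboo S (f i) x)"
  unfolding taboo_def expect_def
  by (subst sum.swap) (auto simp: sum_distrib_left intro!: sum.cong)

lemma taboo_one: "taboo S (\<lambda>_. 1) x = 1 - measure_pmf.prob (K x) S"
proof -
  have "measure_pmf.prob (K x) S = (\<Sum>y\<in>set_pmf (K x) \<inter> S. pmf (K x) y)"
    by (simp add: measure_Int_set_pmf[of "K x" S, symmetric] measure_measure_pmf_finite
        finite_support Int_commute)
  moreover have "taboo S (\<lambda>_. 1) x = (\<Sum>y\<in>set_pmf (K x) - S. pmf (K x) y)"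
    unfolding taboo_def expect_def by (auto simp: if_distrib sum.If_cases finite_support Diff_eq)
  ultimately show ?thesis
    using sum.Int_Diff[OF finite_support, of "pmf (K x)" x S]
      sum_pmf_eq_1[OF finite_support[of x] order_refl] by simp
qed

lemma taboo_one_le: "taboo S (\<lambda>_. 1) x \<le> 1"
  by (simp add: taboo_one)

lemma taboo_power_linear:
  "(taboo S ^^ m) (\<lambda>y. f y + c * g y) x = (taboo S ^^ m) f x + c * (taboo S ^^ m) g x"
proof (induction m arbitrary: x)
  case (Suc m)
  then have "(taboo S ^^ m) (\<lambda>y. f y + c * g y) = (\<lambda>x. (taboo S ^^ m) f x + c * (taboo S ^^ m) g x)"
    by auto
  then show ?case by (simp add: taboo_linear)
qed simp

lemma taboo_power_mono:
  assumes closed: "\<And>x y. x \<in> R \<Longrightarrow> edge x y \<Longrightarrow> y \<in> R"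
    and "\<And>y. y \<in> R \<Longrightarrow> f y \<le> g y"
  shows "x \<in> R \<Longrightarrow> (taboo S ^^ m) f x \<le> (taboo S ^^ m) g x"
proof (induction m arbitrary: x)
  case (Suc m)
  have "(taboo S ^^ m) f y \<le> (taboo S ^^ m) g y" if "edge x y" for y
    using Suc closed that by blast
  then show ?case by (simp add: taboo_mono)
qed (simp add: assms(2))

lemma taboo_power_nonneg:
  assumes closed: "\<And>x y. x \<in> R \<Longrightarrow> edge x y \<Longrightarrow> y \<in> R"
    and "\<And>y. y \<in> R \<Longrightarrow> 0 \<le> f y"
  shows "x \<in> R \<Longrightarrow> 0 \<le> (taboo S ^^ m) f x"
proof (induction m arbitrary: x)
  case (Suc m)
  have "0 \<le> (taboo S ^^ m) f y" if "edge x y" for y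
    using Suc closed that by blast
  then show ?case by (simp add: taboo_nonneg)
qed (simp add: assms(2))

lemma avoid_prob_0 [simp]: "avoid_prob S 0 x = 1"
  by (simp add: avoid_prob_def)

lemma avoid_prob_Suc: "avoid_prob S (Suc n) x = taboo S (avoid_prob S n) x"
  by (simp add: avoid_prob_def)

lemma avoid_prob_nonneg: "0 \<le> avoid_prob S n x"
  by (induction n arbitrary: x) (simp_all add: avoid_prob_Suc taboo_nonneg)

lemma decseq_avoid_prob: "decseq (\<lambda>n. avoid_prob S n x)"
proof (rule decseq_SucI)
  show "avoid_prob S (Suc n) x \<le> avoid_prob S n x" for n
  proof (induction n arbitrary: x)
    case 0
    show ?case using taboo_one_le by (simp add: avoid_prob_def)
  next
    case (Suc n)
    have "taboo S (avoid_prob S (Suc n)) x \<le> taboo S (avoid_prob S n) x"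
      using Suc.IH by (rule taboo_mono)
    then show ?case by (simp only: avoid_prob_Suc)
  qed
qed

lemma avoid_prob_le_one: "avoid_prob S n x \<le> 1"
  using decseqD[OF decseq_avoid_prob, of 0 n] by simp

lemma avoid_time_Suc: "avoid_time S (Suc n) x = 1 + taboo S (avoid_time S n) x"
  unfolding avoid_time_def
  by (simp add: sum.lessThan_Suc_shift avoid_prob_Suc taboo_sum del: sum.lessThan_Suc)

lemma avoid_time_add:
  "avoid_time S (m + n) x = avoid_time S m x + (taboo S ^^ m) (avoid_time S n) x"
proof (induction m arbitrary: x)
  case 0
  show ?case by (simp add: avoid_time_def)
next
  case (Suc m)
  have "avoid_time S (m + n) = (\<lambda>y. avoid_time S m y + 1 * (taboo S ^^ m) (avoid_time S n) y)"
    by (simp add: fun_eq_iff Suc.IH)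
  then have "avoid_time S (Suc m + n) x
      = 1 + taboo S (\<lambda>y. avoid_time S m y + 1 * (taboo S ^^ m) (avoid_time S n) y) x"
    by (simp add: avoid_time_Suc)
  also have "\<dots> = avoid_time S (Suc m) x + (taboo S ^^ Suc m) (avoid_time S n) x"
    by (simp only: taboo_linear avoid_time_Suc funpow.simps o_apply)
  finally show ?case .
qed

lemma avoid_time_le: "avoid_time S n x \<le> real n"
  using sum_mono[of "{..<n}" "\<lambda>k. avoid_prob S k x" "\<lambda>_. 1"] avoid_prob_le_one
  by (simp add: avoid_time_def)

lemma avoid_time_mono: "m \<le> n \<Longrightarrow> avoid_time S m x \<le> avoid_time S n x"
  unfolding avoid_time_def by (intro sum_mono2) (auto simp: avoid_prob_nonneg)

lemma first_passage_Suc_Suc: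
  "first_passage K S (Suc (Suc k)) x = taboo S (first_passage K S (Suc k)) x"
  by (simp add: expectation_eq_expect taboo_def)

lemma sum_first_passage: "(\<Sum>k<n. first_passage K S (Suc k) x) = 1 - avoid_prob S n x"
proof (induction n arbitrary: x)
  case (Suc n)
  have "(\<Sum>k<Suc n. first_passage K S (Suc k) x)
      = first_passage K S (Suc 0) x + taboo S (\<lambda>y. \<Sum>k<n. first_passage K S (Suc k) y) x"
    by (simp only: sum.lessThan_Suc_shift first_passage_Suc_Suc taboo_sum)
  also have "(\<lambda>y. \<Sum>k<n. first_passage K S (Suc k) y) = (\<lambda>y. 1 + (-1) * avoid_prob S n y)"
    using Suc.IH by simp
  also have "taboo S \<dots> x = taboo S (\<lambda>_. 1) x + (-1) * avoid_prob S (Suc n) x"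
    by (simp only: taboo_linear avoid_prob_Suc)
  finally show ?case by (simp add: taboo_one)
qed simp

lemma first_passage_Suc:
  "first_passage K S (Suc k) x = avoid_prob S k x - avoid_prob S (Suc k) x"
  using sum_first_passage[where n="Suc k" and S=S and x=x]
    sum_first_passage[where n=k and S=S and x=x]
  by simp

lemma first_passage_nonneg: "0 \<le> first_passage K S k x"
  using decseqD[OF decseq_avoid_prob, of "k - 1" k] by (cases k) (simp_all add: first_passage_Suc)

lemma first_passage_sums_one:
  assumes "\<And>n. avoid_time S n x \<le> B"
  shows "(\<lambda>n. first_passage K S n x) sums 1"
proof -
  have "summable (\<lambda>n. avoid_prob S n x)"
    using assms
    by (intro summableI_nonneg_bounded[of _ B]) (auto simp: avoid_prob_nonneg avoid_time_def)
  then have "(\<lambda>n. 1 - avoid_prob S n x) \<longlonglongrightarrow> 1 - 0"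
    by (intro tendsto_diff tendsto_const summable_LIMSEQ_zero)
  then have "(\<lambda>n. \<Sum>k<Suc n. first_passage K S k x) \<longlonglongrightarrow> 1"
    by (simp add: sum.lessThan_Suc_shift sum_first_passage del: sum.lessThan_Suc)
  then show ?thesis unfolding sums_def by (subst (asm) filterlim_sequentially_Suc)
qed

lemma summable_first_passage_mean:
  assumes "\<And>n. avoid_time S n x \<le> B"
  shows "summable (\<lambda>n. real n * first_passage K S n x)"
proof (rule summableI_nonneg_bounded[of _ B])
  show "0 \<le> real n * first_passage K S n x" for n
    by (simp add: first_passage_nonneg)
  have mean_eq: "(\<Sum>k<Suc n. real k * first_passage K S k x) + real n * avoid_prob S n x
      = avoid_time S n x" for n
    by (induction n) (simp_all add: avoid_time_def first_passage_Suc algebra_simps)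
  show "(\<Sum>k<n. real k * first_passage K S k x) \<le> B" for n
  proof -
    have "0 \<le> real n * first_passage K S n x" "0 \<le> real n * avoid_prob S n x"
      by (simp_all add: first_passage_nonneg avoid_prob_nonneg)
    then show ?thesis using mean_eq[of n] assms[of n] by simp
  qed
qed

lemma positive_recurrent_stateI:
  "(\<And>n. avoid_time {s} n s \<le> B) \<Longrightarrow> positive_recurrent_state K s"
  unfolding positive_recurrent_state_def
  using first_passage_sums_one summable_first_passage_mean by blast

lemma avoid_prob_less_one_if_reaches:
  "edge\<^sup>+\<^sup>+ x z \<Longrightarrow> z \<in> S \<Longrightarrow> \<exists>n. avoid_prob S n x < 1"
proof (induction x rule: converse_tranclp_induct)
  case (base x)
  have "avoid_prob S 1 x = expect (\<lambda>y. if y \<in> S then 0 else 1) x"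
    by (simp add: avoid_prob_def taboo_def)
  also have "\<dots> < 1"
    using base by (intro expect_less_one[of _ _ z]) auto
  finally show ?case by blast
next
  case (step x y)
  then obtain n where n: "avoid_prob S n y < 1" by blast
  have "avoid_prob S (Suc n) x = expect (\<lambda>v. if v \<in> S then 0 else avoid_prob S n v) x"
    by (simp add: avoid_prob_Suc taboo_def)
  also have "\<dots> < 1"
    using step.hyps(1) n by (intro expect_less_one[of _ _ y]) (auto simp: avoid_prob_le_one)
  finally show ?case by blast
qed

lemma avoid_prob_eq_one_if_unreachable:
  assumes "\<not> (\<exists>z\<in>S. edge\<^sup>+\<^sup>+ x z)"
  shows "avoid_prob S n x = 1"
  using assms
proof (induction n arbitrary: x)
  case (Suc n)
  have "y \<notin> S \<and> avoid_prob S n y = 1" if "edge x y" for y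
    using Suc that by (meson tranclp.r_into_trancl tranclp_into_tranclp2)
  then have "avoid_prob S (Suc n) x = expect (\<lambda>_. 1) x"
    unfolding avoid_prob_Suc taboo_def expect_def by (intro sum.cong) auto
  then show ?case by simp
qed simp

lemma reaches_if_avoid_time_bounded:
  assumes "\<And>n. avoid_time S n x \<le> B"
  shows "\<exists>z\<in>S. edge\<^sup>+\<^sup>+ x z"
proof (rule ccontr)
  assume "\<not> (\<exists>z\<in>S. edge\<^sup>+\<^sup>+ x z)"
  then have "avoid_time S n x = real n" for n
    by (simp add: avoid_time_def avoid_prob_eq_one_if_unreachable)
  then show False
    using assms[of "nat \<lceil>B\<rceil> + 1"] real_nat_ceiling_ge[of B] by simp
qed

lemma avoid_time_le_lyapunov:
  assumes closed: "\<And>x y. x \<in> R \<Longrightarrow> edge x y \<Longrightarrow> y \<in> R"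
    and nonneg: "\<And>x. x \<in> R \<Longrightarrow> 0 \<le> U x"
    and drift: "\<And>x. x \<in> R \<Longrightarrow> x \<notin> S \<Longrightarrow> 1 + taboo S U x \<le> U x"
  shows "x \<in> R \<Longrightarrow> x \<notin> S \<Longrightarrow> avoid_time S n x \<le> U x"
proof (induction n arbitrary: x)
  case 0
  then show ?case using nonneg by (simp add: avoid_time_def)
next
  case (Suc n)
  have "avoid_time S (Suc n) x = 1 + taboo S (avoid_time S n) x"
    by (rule avoid_time_Suc)
  also have "\<dots> \<le> 1 + taboo S U x"
    using Suc closed by (simp add: taboo_mono)
  also have "\<dots> \<le> U x"
    using drift Suc.prems by blast
  finally show ?case .
qed

text \<open>Inside F the one-step drift is replaced by an m-step bound, which is what a finite
  set of states that reach S can provide.\<close>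
lemma avoid_time_le_lyapunov_multistep:
  assumes closed: "\<And>x y. x \<in> R \<Longrightarrow> edge x y \<Longrightarrow> y \<in> R"
    and nonneg: "\<And>x. x \<in> R \<Longrightarrow> 0 \<le> U x"
    and drift: "\<And>x. x \<in> R \<Longrightarrow> x \<notin> F \<Longrightarrow> 1 + taboo S U x \<le> U x"
    and drift_F: "\<And>x. x \<in> R \<Longrightarrow> x \<in> F \<Longrightarrow> avoid_time S m x + (taboo S ^^ m) U x \<le> U x"
    and "0 < m"
  shows "x \<in> R \<Longrightarrow> avoid_time S n x \<le> U x"
proof (induction n arbitrary: x rule: less_induct)
  case (less n)
  consider "n = 0" | "x \<notin> F" "n \<noteq> 0" | "x \<in> F" "n \<le> m" | "x \<in> F" "m < n"
    by linarith
  then show ?case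
  proof cases
    case 1
    then show ?thesis using nonneg less.prems by (simp add: avoid_time_def)
  next
    case 2
    then obtain k where n: "n = Suc k" by (cases n) auto
    have "avoid_time S n x = 1 + taboo S (avoid_time S k) x"
      by (simp add: n avoid_time_Suc)
    also have "\<dots> \<le> 1 + taboo S U x"
      using less.IH[of k] n less.prems closed by (simp add: taboo_mono)
    also have "\<dots> \<le> U x"
      using drift less.prems 2 by blast
    finally show ?thesis .
  next
    case 3
    have "avoid_time S n x \<le> avoid_time S m x"
      using 3 by (simp add: avoid_time_mono)
    moreover have "0 \<le> (taboo S ^^ m) U x"
      using taboo_power_nonneg[OF closed nonneg less.prems] .
    ultimately show ?thesis using drift_F[OF less.prems] 3 by linarith
  next
    case 4
    define j where "j = n - m"
    have "avoid_time S n x = avoid_time S m x + (taboo S ^^ m) (avoid_time S j) x"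
      using 4 avoid_time_add[of S m j x] by (simp add: j_def)
    also have "\<dots> \<le> avoid_time S m x + (taboo S ^^ m) U x"
      using taboo_power_mono[OF closed less.IH less.prems] \<open>0 < m\<close> 4 by (simp add: j_def)
    also have "\<dots> \<le> U x"
      using drift_F less.prems 4 by blast
    finally show ?thesis .
  qed
qed

lemma avoid_prob_uniformly_less_one:
  assumes "finite G" and reaches_S: "\<And>y. y \<in> G \<Longrightarrow> \<exists>z\<in>S. edge\<^sup>+\<^sup>+ y z"
  obtains m a where "0 < m" and "a < 1" and "\<And>y. y \<in> G \<Longrightarrow> avoid_prob S m y \<le> a"
proof -
  have "\<forall>y\<in>G. eventually (\<lambda>n. avoid_prob S n y < 1) sequentially"
  proof
    fix y assume "y \<in> G"
    then obtain n where "avoid_prob S n y < 1"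
      using reaches_S avoid_prob_less_one_if_reaches by blast
    then show "eventually (\<lambda>n. avoid_prob S n y < 1) sequentially"
      unfolding eventually_sequentially using decseqD[OF decseq_avoid_prob] by (meson le_less_trans)
  qed
  then have "eventually (\<lambda>m. 0 < m \<and> (\<forall>y\<in>G. avoid_prob S m y < 1)) sequentially"
    by (intro eventually_conj eventually_gt_at_top eventually_ball_finite[OF \<open>finite G\<close>])
  then obtain m where "0 < m" and m: "\<And>y. y \<in> G \<Longrightarrow> avoid_prob S m y < 1"
    using eventually_sequentially by auto
  define a where "a = Max (insert 0 ((\<lambda>y. avoid_prob S m y) ` G))"
  have "a < 1" using m \<open>finite G\<close> by (simp add: a_def)
  moreover have "avoid_prob S m y \<le> a" if "y \<in> G" for y
    unfolding a_def using \<open>finite G\<close> that by (intro Max_ge) auto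
  ultimately show ?thesis using \<open>0 < m\<close> that by blast
qed

text \<open>Foster's argument with the Lyapunov function L + C: on the finite set F the chain
  avoids S for m steps with probability at most a < 1, and C is chosen so that this
  pays for the m steps and for the growth of L during them.\<close>
lemma avoid_time_bounded:
  assumes closed: "\<And>x y. x \<in> R \<Longrightarrow> edge x y \<Longrightarrow> y \<in> R"
    and "finite F"
    and nonneg: "\<And>x. x \<in> R \<Longrightarrow> 0 \<le> L x"
    and drift: "\<And>x. x \<in> R \<Longrightarrow> x \<notin> F \<Longrightarrow> 1 + expect L x \<le> L x"
    and reaches_S: "\<And>y. y \<in> F \<Longrightarrow> y \<in> R \<Longrightarrow> \<exists>z\<in>S. edge\<^sup>+\<^sup>+ y z"
    and "x \<in> R"
  shows "\<exists>B. \<forall>n. avoid_time S n x \<le> B"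
proof -
  define G where "G = F \<inter> R"
  have "finite G" using \<open>finite F\<close> by (simp add: G_def)
  then obtain m a where "0 < m" "a < 1" and a: "\<And>y. y \<in> G \<Longrightarrow> avoid_prob S m y \<le> a"
    using reaches_S avoid_prob_uniformly_less_one[of G S] unfolding G_def by blast
  define b where "b = Max (insert 0 ((\<lambda>y. (taboo S ^^ m) L y) ` G))"
  have b: "(taboo S ^^ m) L y \<le> b" if "y \<in> G" for y
    unfolding b_def using \<open>finite G\<close> that by (intro Max_ge) auto
  have "0 \<le> b" unfolding b_def using \<open>finite G\<close> by (intro Max_ge) auto
  define C where "C = (real m + b) / (1 - a)"
  have "0 \<le> C" using \<open>a < 1\<close> \<open>0 \<le> b\<close> by (simp add: C_def)
  have C: "real m + b + C * a = C" using \<open>a < 1\<close> by (simp add: C_def field_simps)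
  have "avoid_time S n x \<le> L x + C" for n
  proof (rule avoid_time_le_lyapunov_multistep[OF closed _ _ _ \<open>0 < m\<close> \<open>x \<in> R\<close>])
    show "0 \<le> L y + C" if "y \<in> R" for y
      using nonneg[OF that] \<open>0 \<le> C\<close> by simp
    show "1 + taboo S (\<lambda>y. L y + C) y \<le> L y + C" if "y \<in> R" "y \<notin> F" for y
    proof -
      have "taboo S L y \<le> expect L y" using closed nonneg that(1) by (simp add: taboo_le_expect)
      moreover have "C * taboo S (\<lambda>_. 1) y \<le> C"
        using \<open>0 \<le> C\<close> taboo_one_le by (simp add: mult_left_le)
      ultimately show ?thesis using drift[OF that] taboo_linear[of S L C "\<lambda>_. 1" y] by simp
    qed
    show "avoid_time S m y + (taboo S ^^ m) (\<lambda>y. L y + C) y \<le> L y + C" if "y \<in> R" "y \<in> F" for y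
    proof -
      have "y \<in> G" using that by (simp add: G_def)
      have "(taboo S ^^ m) (\<lambda>y. L y + C) y = (taboo S ^^ m) L y + C * avoid_prob S m y"
        using taboo_power_linear[where f=L and c=C and g="\<lambda>_. 1"] by (simp add: avoid_prob_def)
      also have "\<dots> \<le> b + C * a"
        using a[OF \<open>y \<in> G\<close>] b[OF \<open>y \<in> G\<close>] \<open>0 \<le> C\<close> by (simp add: add_mono mult_left_mono)
      finally show ?thesis using avoid_time_le[of S m y] C nonneg[OF that(1)] by linarith
    qed
  qed
  then show ?thesis by blast
qed

lemma reaches_drift_set:
  assumes closed: "\<And>x y. x \<in> R \<Longrightarrow> edge x y \<Longrightarrow> y \<in> R"
    and nonneg: "\<And>x. x \<in> R \<Longrightarrow> 0 \<le> L x"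
    and drift: "\<And>x. x \<in> R \<Longrightarrow> x \<notin> F \<Longrightarrow> 1 + expect L x \<le> L x"
    and "y \<in> R"
  shows "\<exists>w\<in>F. edge\<^sup>+\<^sup>+ y w"
proof -
  obtain v where v: "edge y v" using set_pmf_not_empty by fast
  show ?thesis
  proof (cases "v \<in> F")
    case True
    then show ?thesis using v by blast
  next
    case False
    have "avoid_time F n v \<le> L v" for n
    proof (rule avoid_time_le_lyapunov[OF closed nonneg])
      show "1 + taboo F L x \<le> L x" if "x \<in> R" "x \<notin> F" for x
        using taboo_le_expect[of x L F] closed nonneg drift that by fastforce
    qed (use closed[OF \<open>y \<in> R\<close> v] False in auto)
    then obtain w where "w \<in> F" "edge\<^sup>+\<^sup>+ v w"
      using reaches_if_avoid_time_bounded by blast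
    then show ?thesis using tranclp_into_tranclp2[of edge y v w] v by blast
  qed
qed

lemma positive_recurrent_if_essential:
  assumes closed: "\<And>x y. x \<in> R \<Longrightarrow> edge x y \<Longrightarrow> y \<in> R"
    and "finite F"
    and nonneg: "\<And>x. x \<in> R \<Longrightarrow> 0 \<le> L x"
    and drift: "\<And>x. x \<in> R \<Longrightarrow> x \<notin> F \<Longrightarrow> 1 + expect L x \<le> L x"
    and "z \<in> R" and "essential edge z"
  shows "positive_recurrent_state K z"
proof -
  define R' where "R' = {x. edge\<^sup>*\<^sup>* z x}"
  have R'_sub: "R' \<subseteq> R"
    using rtranclp_closed[OF _ closed \<open>z \<in> R\<close>] by (auto simp: R'_def)
  have "\<exists>B. \<forall>n. avoid_time {z} n z \<le> B"
  proof (rule avoid_time_bounded[of R' F L])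
    show "y \<in> R'" if "x \<in> R'" "edge x y" for x y
      using that rtranclp.rtrancl_into_rtrancl[of edge z x y] by (simp add: R'_def)
    show "\<exists>z'\<in>{z}. edge\<^sup>+\<^sup>+ y z'" if "y \<in> R'" for y
    proof -
      obtain v where v: "edge y v" using set_pmf_not_empty by fast
      then have "edge\<^sup>+\<^sup>+ z v"
        using \<open>y \<in> R'\<close> rtranclp_into_tranclp1[of edge z y v] by (simp add: R'_def)
      then have "edge\<^sup>+\<^sup>+ v z"
        using \<open>essential edge z\<close> by (simp add: essential_def)
      then show ?thesis using tranclp_into_tranclp2[of edge y v z] v by blast
    qed
  qed (use R'_sub nonneg drift \<open>finite F\<close> in \<open>auto simp: R'_def\<close>)
  then show ?thesis by (blast intro: positive_recurrent_stateI)
qed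

lemma reaches_positive_recurrent:
  assumes closed: "\<And>x y. x \<in> R \<Longrightarrow> edge x y \<Longrightarrow> y \<in> R"
    and "finite F"
    and nonneg: "\<And>x. x \<in> R \<Longrightarrow> 0 \<le> L x"
    and drift: "\<And>x. x \<in> R \<Longrightarrow> x \<notin> F \<Longrightarrow> 1 + expect L x \<le> L x"
    and "y \<in> R"
  shows "\<exists>z\<in>{z. positive_recurrent_state K z}. edge\<^sup>+\<^sup>+ y z"
proof -
  have reaches_F: "\<exists>w\<in>F. edge\<^sup>+\<^sup>+ x w" if "x \<in> R" for x
    using reaches_drift_set[OF closed nonneg drift that] .
  have "\<exists>z\<in>F. essential edge z \<and> edge\<^sup>+\<^sup>+ y z"
    using \<open>finite F\<close> closed reaches_F \<open>y \<in> R\<close> by (rule reaches_essential)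
  then obtain z where "essential edge z" "edge\<^sup>+\<^sup>+ y z" by blast
  have "z \<in> R"
    using rtranclp_closed[OF tranclp_into_rtranclp[OF \<open>edge\<^sup>+\<^sup>+ y z\<close>] closed \<open>y \<in> R\<close>] .
  have "positive_recurrent_state K z"
    using closed \<open>finite F\<close> nonneg drift \<open>z \<in> R\<close> \<open>essential edge z\<close>
    by (rule positive_recurrent_if_essential)
  then show ?thesis using \<open>edge\<^sup>+\<^sup>+ y z\<close> by blast
qed

theorem positive_recurrent_chain_if_drift:
  fixes L :: "'s \<Rightarrow> real"
  assumes closed: "\<And>x y. x \<in> R \<Longrightarrow> y \<in> set_pmf (K x) \<Longrightarrow> y \<in> R"
    and init: "set_pmf init \<subseteq> R"
    and "finite F"
    and nonneg: "\<And>x. x \<in> R \<Longrightarrow> 0 \<le> L x"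
    and "0 < \<epsilon>"
    and drift: "\<And>x. x \<in> R \<Longrightarrow> x \<notin> F \<Longrightarrow> measure_pmf.expectation (K x) L \<le> L x - \<epsilon>"
  shows "positive_recurrent_chain init K"
proof -
  define L' where "L' x = L x / \<epsilon>" for x
  have nonneg': "0 \<le> L' x" if "x \<in> R" for x
    using nonneg[OF that] \<open>0 < \<epsilon>\<close> by (simp add: L'_def)
  have drift': "1 + expect L' x \<le> L' x" if "x \<in> R" "x \<notin> F" for x
  proof -
    have "expect L' x = expect L x / \<epsilon>"
      by (simp add: L'_def expect_def sum_divide_distrib)
    then show ?thesis
      using drift[OF that] \<open>0 < \<epsilon>\<close> by (simp add: expectation_eq_expect L'_def field_simps)
  qed
  show ?thesis
    unfolding positive_recurrent_chain_def
  proof (intro allI impI)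
    fix x assume "reachable init K x"
    then have "x \<in> R" by induction (use init closed in auto)
    have "\<exists>B. \<forall>n. avoid_time {z. positive_recurrent_state K z} n x \<le> B"
    proof (rule avoid_time_bounded[OF closed \<open>finite F\<close> nonneg' drift' _ \<open>x \<in> R\<close>])
      show "\<exists>z\<in>{z. positive_recurrent_state K z}. edge\<^sup>+\<^sup>+ y z" if "y \<in> F" "y \<in> R" for y
        using closed \<open>finite F\<close> nonneg' drift' \<open>y \<in> R\<close> by (rule reaches_positive_recurrent)
    qed
    then show "(\<lambda>n. first_passage K {z. positive_recurrent_state K z} n x) sums 1"
      using first_passage_sums_one by blast
  qed
qed

end


section \<open>The LEQ chain\<close>

definition leq_next :: "nat \<Rightarrow> (nat \<Rightarrow> real) \<Rightarrow> qstate \<Rightarrow> (nat \<Rightarrow> bool) \<Rightarrow> qstate" where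
  "leq_next N lam st A = (case st of (Q, V, c) \<Rightarrow>
     (let s = leq_sched N lam st
      in ((\<lambda>j. if j \<in> {1..N} then Q j - (if j = s then 1 else 0) + (if A j then 1 else 0) else 0),
          (\<lambda>j. if j \<in> {1..N} then (if j = s then 1 else V j + 1) else 0),
          s)))"

lemma leq_kernel_eq_map: "leq_kernel N lam st = map_pmf (leq_next N lam st) (arrivals N lam)"
proof -
  obtain Q V c where st: "st = (Q, V, c)" by (cases st)
  define s where "s = leq_sched N lam (Q, V, c)"
  have served: "Q j - (if j = s \<and> 0 < Q j then 1 else 0) = Q j - (if j = s then 1 else 0)" for j
    by simp
  show ?thesis
    unfolding leq_kernel_def leq_next_def st prod.case Let_def s_def[symmetric] served ..
qed

lemma set_pmf_arrivals: "set_pmf (arrivals N lam) \<subseteq> PiE_dflt {1..N} False (\<lambda>_. UNIV)"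
  unfolding arrivals_def using set_Pi_pmf_subset[of "{1..N}" False] by (auto simp: PiE_dflt_def)

lemma finite_set_pmf_arrivals: "finite (set_pmf (arrivals N lam))"
  by (rule finite_subset[OF set_pmf_arrivals]) auto

lemma arrivals_outside: "A \<in> set_pmf (arrivals N lam) \<Longrightarrow> j \<notin> {1..N} \<Longrightarrow> \<not> A j"
  using set_pmf_arrivals by (auto simp: PiE_dflt_def)

lemma expectation_arrival:
  assumes "j \<in> {1..N}" and "0 \<le> lam j" and "lam j \<le> 1"
  shows "measure_pmf.expectation (arrivals N lam) (\<lambda>A. if A j then 1 else 0) = lam j"
proof -
  have "measure_pmf.expectation (arrivals N lam) (\<lambda>A. if A j then 1 else 0)
      = measure_pmf.expectation (map_pmf (\<lambda>A. A j) (arrivals N lam))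
          (\<lambda>b. if b then 1 else (0::real))"
    by simp
  also have "map_pmf (\<lambda>A. A j) (arrivals N lam) = bernoulli_pmf (lam j)"
    unfolding arrivals_def using assms by (subst Pi_pmf_component) auto
  also have "measure_pmf.expectation (bernoulli_pmf (lam j)) (\<lambda>b. if b then 1 else (0::real))
      = lam j"
    by (subst integral_measure_pmf_real[where A="{True}"]) (use assms in \<open>auto split: if_splits\<close>)
  finally show ?thesis .
qed

lemma expectation_arrival_count:
  assumes "\<And>j. j \<in> {1..N} \<Longrightarrow> 0 \<le> lam j \<and> lam j \<le> 1"
  shows "measure_pmf.expectation (arrivals N lam) (\<lambda>A. \<Sum>j\<in>{1..N}. if A j then 1 else 0)
    = (\<Sum>j\<in>{1..N}. lam j)"
  using assms
  by (simp add: integral_sum integrable_measure_pmf_finite[OF finite_set_pmf_arrivals]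
      expectation_arrival)

lemma leq_argmax:
  fixes lam :: "nat \<Rightarrow> real" and V :: "nat \<Rightarrow> nat"
  assumes "N \<ge> 1"
  defines "i \<equiv> leq_argmax N lam V"
  shows "i \<in> {1..N}" and "\<And>j. j \<in> {1..N} \<Longrightarrow> lam j * real (V j) \<le> lam i * real (V i)"
proof -
  let ?w = "\<lambda>j. lam j * real (V j)"
  have "finite (?w ` {1..N})" and "?w ` {1..N} \<noteq> {}"
    using assms(1) by auto
  then have "Max (?w ` {1..N}) \<in> ?w ` {1..N}"
    by (rule Max_in)
  then obtain k where k: "k \<in> {1..N}" "Max (?w ` {1..N}) = ?w k"
    by (rule imageE) simp
  have "?w j \<le> ?w k" if "j \<in> {1..N}" for j
  proof -
    have "?w j \<le> Max (?w ` {1..N})"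
      by (rule Max_ge[OF \<open>finite (?w ` {1..N})\<close>]) (use that in blast)
    then show ?thesis using k(2) by simp
  qed
  with k(1) have "\<exists>k. k \<in> {1..N} \<and> (\<forall>j\<in>{1..N}. ?w j \<le> ?w k)"
    by blast
  then have "i \<in> {1..N} \<and> (\<forall>j\<in>{1..N}. ?w j \<le> ?w i)"
    unfolding i_def leq_argmax_def by (rule LeastI_ex)
  then show "i \<in> {1..N}" and "\<And>j. j \<in> {1..N} \<Longrightarrow> ?w j \<le> ?w i"
    by blast+
qed

lemma leq_sched_incumbent: "c \<in> {1..N} \<Longrightarrow> 0 < Q c \<Longrightarrow> leq_sched N lam (Q, V, c) = c"
  by (simp add: leq_sched_def)

lemma leq_sched_switch:
  "\<not> (c \<in> {1..N} \<and> 0 < Q c) \<Longrightarrow> leq_sched N lam (Q, V, c) = leq_argmax N lam V"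
  unfolding leq_sched_def by auto

lemma leq_sched_in_range:
  assumes "N \<ge> 1"
  shows "leq_sched N lam (Q, V, c) \<in> {1..N}"
  using leq_sched_incumbent leq_sched_switch leq_argmax(1)[OF assms] by metis

lemma leq_sched_empty:
  assumes "Q (leq_sched N lam (Q, V, c)) = 0"
  shows "leq_sched N lam (Q, V, c) = leq_argmax N lam V"
  using assms leq_sched_incumbent leq_sched_switch by (metis less_not_refl)

text \<open>Off the incumbent, a queue was empty when it was last left (or at time 0) and has
  received at most one packet per slot since.\<close>
definition leq_inv :: "nat \<Rightarrow> qstate \<Rightarrow> bool" where
  "leq_inv N st \<longleftrightarrow> (case st of (Q, V, c) \<Rightarrow>
     c \<le> N \<and> (\<forall>j. j \<notin> {1..N} \<longrightarrow> Q j = 0 \<and> V j = 0) \<and> (c \<in> {1..N} \<longrightarrow> V c = 1) \<and>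
     (\<forall>j\<in>{1..N}. j \<noteq> c \<longrightarrow> Q j \<le> V j + 1))"

lemma leq_inv_init: "st \<in> set_pmf (leq_init N lam) \<Longrightarrow> leq_inv N st"
  by (auto simp: leq_init_def leq_inv_def dest: arrivals_outside)

lemma leq_inv_next:
  assumes "N \<ge> 1" and inv: "leq_inv N st" and "A \<in> set_pmf (arrivals N lam)"
  shows "leq_inv N (leq_next N lam st A)"
proof -
  obtain Q V c where st: "st = (Q, V, c)" by (cases st)
  define s where "s = leq_sched N lam st"
  define I where "I = {1..N}"
  have "s \<in> I" using leq_sched_in_range[OF assms(1)] by (simp add: s_def I_def st)
  have "Q j \<le> V j + 1" if "j \<in> I" "j \<noteq> s" for j
  proof (cases "j = c")
    case True
    then have "\<not> 0 < Q j"
      using leq_sched_incumbent[of c N Q lam V] that by (auto simp: s_def st I_def)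
    then show ?thesis by simp
  next
    case False
    then show ?thesis using inv that by (simp add: leq_inv_def st I_def)
  qed
  then have bound: "Q j + (if A j then 1 else 0) \<le> V j + 1 + 1" if "j \<in> I" "j \<noteq> s" for j
    using that by fastforce
  have "leq_next N lam st A =
    ((\<lambda>j. if j \<in> I then Q j - (if j = s then 1 else 0) + (if A j then 1 else 0) else 0),
     (\<lambda>j. if j \<in> I then (if j = s then 1 else V j + 1) else 0), s)"
    unfolding leq_next_def s_def st I_def by (simp add: Let_def)
  also have "leq_inv N \<dots>"
    unfolding leq_inv_def prod.case I_def[symmetric]
  proof (intro conjI allI ballI impI)
    show "s \<le> N" using \<open>s \<in> I\<close> by (simp add: I_def)
  next
    fix j assume "j \<in> I" "j \<noteq> s"
    then show "(if j \<in> I then Q j - (if j = s then 1 else 0) + (if A j then 1 else 0) else 0)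
      \<le> (if j \<in> I then (if j = s then 1 else V j + 1) else 0) + 1"
      using bound by simp
  qed (use \<open>s \<in> I\<close> in simp_all)
  finally show ?thesis .
qed

lemma leq_inv_kernel:
  assumes "N \<ge> 1" and "leq_inv N st" and "st' \<in> set_pmf (leq_kernel N lam st)"
  shows "leq_inv N st'"
proof -
  obtain A where "A \<in> set_pmf (arrivals N lam)" and "st' = leq_next N lam st A"
    using assms(3) by (auto simp: leq_kernel_eq_map)
  then show ?thesis using leq_inv_next[OF assms(1,2)] by simp
qed

lemma sum_served_backlog:
  fixes Q :: "'a \<Rightarrow> nat"
  assumes "finite I" and "s \<in> I"
  shows "(\<Sum>j\<in>I. real (Q j - (if j = s then 1 else 0) + (if A j then 1 else 0)))
    = (\<Sum>j\<in>I. real (Q j)) - (if 0 < Q s then 1 else 0) + (\<Sum>j\<in>I. if A j then 1 else 0)"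
proof -
  have "(\<Sum>j\<in>I. real (Q j - (if j = s then 1 else 0) + (if A j then 1 else 0)))
      = (\<Sum>j\<in>I. real (Q j) - (if j = s then if 0 < Q s then 1 else 0 else 0)
          + (if A j then 1 else 0))"
    by (intro sum.cong) (auto simp: of_nat_diff)
  also have "\<dots> = (\<Sum>j\<in>I. real (Q j)) - (if 0 < Q s then 1 else 0) + (\<Sum>j\<in>I. if A j then 1 else 0)"
    using assms by (simp add: sum.distrib sum_subtractf)
  finally show ?thesis .
qed

lemma sum_remove_exchange_le:
  fixes f :: "'a \<Rightarrow> real"
  assumes "finite I" and "s \<in> I" and "c \<in> I \<Longrightarrow> c \<noteq> s \<Longrightarrow> f c \<le> 1"
  shows "(\<Sum>j\<in>I - {s}. f j) \<le> (\<Sum>j\<in>I - {c}. f j) + 1 - (if s \<noteq> c then f s else 0)"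
proof (cases "s = c")
  case False
  have "sum f I = f s + (\<Sum>j\<in>I - {s}. f j)"
    using assms(1,2) by (rule sum.remove)
  moreover have "sum f I = (if c \<in> I then f c else 0) + (\<Sum>j\<in>I - {c}. f j)"
    using assms(1) sum.remove[OF assms(1), of c f] by auto
  ultimately show ?thesis using False assms(3) by (auto split: if_splits)
qed simp

text \<open>lam j * V j is the expected number of arrivals to queue j since it was last
  scheduled, the expected queue length maximised by LEQ; the deficit is how far the actual
  backlog falls short of it.\<close>
definition deficit :: "(nat \<Rightarrow> real) \<Rightarrow> (nat \<Rightarrow> nat) \<Rightarrow> (nat \<Rightarrow> nat) \<Rightarrow> nat \<Rightarrow> real" where
  "deficit lam Q V j = max 0 (lam j * real (V j) - real (Q j))"

definition leq_lyapunov :: "nat \<Rightarrow> (nat \<Rightarrow> real) \<Rightarrow> real \<Rightarrow> qstate \<Rightarrow> real" where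
  "leq_lyapunov N lam \<kappa> st = (case st of (Q, V, c) \<Rightarrow>
     (\<Sum>j\<in>{1..N}. real (Q j)) + \<kappa> * (\<Sum>j\<in>{1..N} - {c}. deficit lam Q V j))"

lemma leq_lyapunov_nonneg: "0 \<le> \<kappa> \<Longrightarrow> 0 \<le> leq_lyapunov N lam \<kappa> st"
  unfolding leq_lyapunov_def deficit_def
  by (cases st) (auto intro!: add_nonneg_nonneg mult_nonneg_nonneg sum_nonneg)

lemma leq_lyapunov_next_le:
  assumes "N \<ge> 1" and inv: "leq_inv N (Q, V, c)"
    and lam: "\<And>j. j \<in> {1..N} \<Longrightarrow> 0 \<le> lam j \<and> lam j \<le> 1" and "0 \<le> \<kappa>"
    and s: "s = leq_sched N lam (Q, V, c)"
  shows "leq_lyapunov N lam \<kappa> (leq_next N lam (Q, V, c) A)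
    \<le> leq_lyapunov N lam \<kappa> (Q, V, c) - (if 0 < Q s then 1 else 0)
      + (\<Sum>j\<in>{1..N}. if A j then 1 else 0) + \<kappa> * (1 + (\<Sum>j\<in>{1..N}. lam j))
      - \<kappa> * (if s \<noteq> c then deficit lam Q V s else 0)"
proof -
  define I where "I = {1..N}"
  define Q' where
    "Q' j = (if j \<in> I then Q j - (if j = s then 1 else 0) + (if A j then 1 else 0) else 0)" for j
  define V' where "V' j = (if j \<in> I then if j = s then 1 else V j + 1 else 0)" for j
  have "finite I" and "s \<in> I"
    using leq_sched_in_range[OF assms(1)] s by (simp_all add: I_def)
  have "leq_next N lam (Q, V, c) A = (Q', V', s)"
    unfolding leq_next_def s Q'_def V'_def I_def by (simp add: Let_def)
  then have next_eq: "leq_lyapunov N lam \<kappa> (leq_next N lam (Q, V, c) A)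
      = (\<Sum>j\<in>I. real (Q' j)) + \<kappa> * (\<Sum>j\<in>I - {s}. deficit lam Q' V' j)"
    by (simp add: leq_lyapunov_def I_def)
  have backlog: "(\<Sum>j\<in>I. real (Q' j))
      = (\<Sum>j\<in>I. real (Q j)) - (if 0 < Q s then 1 else 0) + (\<Sum>j\<in>I. if A j then 1 else 0)"
    using sum_served_backlog[OF \<open>finite I\<close> \<open>s \<in> I\<close>, of Q A] by (simp add: Q'_def)
  have "deficit lam Q' V' j \<le> deficit lam Q V j + lam j" if "j \<in> I - {s}" for j
    using that lam[of j] by (auto simp: deficit_def Q'_def V'_def I_def algebra_simps)
  then have "(\<Sum>j\<in>I - {s}. deficit lam Q' V' j) \<le> (\<Sum>j\<in>I - {s}. deficit lam Q V j + lam j)"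
    by (rule sum_mono)
  also have "\<dots> \<le> (\<Sum>j\<in>I - {s}. deficit lam Q V j) + (\<Sum>j\<in>I. lam j)"
    using lam \<open>finite I\<close> by (simp add: sum.distrib) (intro sum_mono2, auto simp: I_def)
  also have "\<dots> \<le> (\<Sum>j\<in>I - {c}. deficit lam Q V j) + 1 - (if s \<noteq> c then deficit lam Q V s else 0)
      + (\<Sum>j\<in>I. lam j)"
  proof -
    have "deficit lam Q V c \<le> 1" if "c \<in> I" "c \<noteq> s"
    proof -
      have "0 < Q c \<Longrightarrow> False"
        using leq_sched_incumbent[of c N Q lam V] that s by (simp add: I_def)
      then show ?thesis
        using inv lam[of c] that by (simp add: deficit_def leq_inv_def I_def)
    qed
    then show ?thesis
      using sum_remove_exchange_le[OF \<open>finite I\<close> \<open>s \<in> I\<close>, of c "deficit lam Q V"] by simp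
  qed
  finally have "\<kappa> * (\<Sum>j\<in>I - {s}. deficit lam Q' V' j) \<le> \<kappa> * ((\<Sum>j\<in>I - {c}. deficit lam Q V j)
      + 1 - (if s \<noteq> c then deficit lam Q V s else 0) + (\<Sum>j\<in>I. lam j))"
    using \<open>0 \<le> \<kappa>\<close> by (rule mult_left_mono)
  then show ?thesis
    unfolding next_eq backlog by (simp add: leq_lyapunov_def I_def algebra_simps)
qed

lemma expectation_leq_lyapunov_le:
  assumes "N \<ge> 1" and "leq_inv N (Q, V, c)"
    and lam: "\<And>j. j \<in> {1..N} \<Longrightarrow> 0 \<le> lam j \<and> lam j \<le> 1" and "0 \<le> \<kappa>"
    and s: "s = leq_sched N lam (Q, V, c)"
  shows "measure_pmf.expectation (leq_kernel N lam (Q, V, c)) (leq_lyapunov N lam \<kappa>)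
    \<le> leq_lyapunov N lam \<kappa> (Q, V, c) - (if 0 < Q s then 1 else 0) + (\<Sum>j\<in>{1..N}. lam j)
      + \<kappa> * (1 + (\<Sum>j\<in>{1..N}. lam j)) - \<kappa> * (if s \<noteq> c then deficit lam Q V s else 0)"
proof -
  define r where "r = leq_lyapunov N lam \<kappa> (Q, V, c) - (if 0 < Q s then 1 else 0)
    + \<kappa> * (1 + (\<Sum>j\<in>{1..N}. lam j)) - \<kappa> * (if s \<noteq> c then deficit lam Q V s else 0)"
  let ?count = "\<lambda>A. \<Sum>j\<in>{1..N}. if A j then 1 else (0::real)"
  have int: "integrable (measure_pmf (arrivals N lam)) f" for f :: "_ \<Rightarrow> real"
    by (rule integrable_measure_pmf_finite[OF finite_set_pmf_arrivals])
  have "measure_pmf.expectation (leq_kernel N lam (Q, V, c)) (leq_lyapunov N lam \<kappa>)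
      = measure_pmf.expectation (arrivals N lam)
          (\<lambda>A. leq_lyapunov N lam \<kappa> (leq_next N lam (Q, V, c) A))"
    by (simp add: leq_kernel_eq_map)
  also have "\<dots> \<le> measure_pmf.expectation (arrivals N lam) (\<lambda>A. r + ?count A)"
  proof (intro integral_mono int)
    show "leq_lyapunov N lam \<kappa> (leq_next N lam (Q, V, c) A) \<le> r + ?count A" for A
      using leq_lyapunov_next_le[OF assms, of A] unfolding r_def by linarith
  qed
  also have "\<dots> = r + (\<Sum>j\<in>{1..N}. lam j)"
  proof -
    have "measure_pmf.expectation (arrivals N lam) ?count = (\<Sum>j\<in>{1..N}. lam j)"
      by (rule expectation_arrival_count) (rule lam)
    then show ?thesis by (simp add: int)
  qed
  finally show ?thesis by (simp add: r_def)
qed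

lemma leq_sched_empty_heavy:
  assumes "N \<ge> 1" and inv: "leq_inv N (Q, V, c)" and lam1: "\<And>j. j \<in> {1..N} \<Longrightarrow> lam j \<le> 1"
    and s: "s = leq_sched N lam (Q, V, c)" and "Q s = 0" and heavy: "1 < lam s * real (V s)"
  shows "s \<noteq> c" and "deficit lam Q V s = lam s * real (V s)"
proof -
  show "s \<noteq> c"
  proof
    assume "s = c"
    then have "c \<in> {1..N}" using leq_sched_in_range[OF assms(1), of lam Q V c] s by simp
    then show False using inv lam1[of c] heavy \<open>s = c\<close> by (simp add: leq_inv_def)
  qed
  show "deficit lam Q V s = lam s * real (V s)"
    using \<open>Q s = 0\<close> heavy by (simp add: deficit_def)
qed

lemma leq_lyapunov_drift:
  assumes "N \<ge> 1" and inv: "leq_inv N (Q, V, c)" and lam0: "\<And>j. j \<in> {1..N} \<Longrightarrow> 0 \<le> lam j"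
    and \<sigma>: "\<sigma> = (\<Sum>j\<in>{1..N}. lam j)" "\<sigma> < 1"
    and s: "s = leq_sched N lam (Q, V, c)"
    and busy: "0 < Q s \<or> 16 / (1 - \<sigma>) < lam s * real (V s)"
  shows "measure_pmf.expectation (leq_kernel N lam (Q, V, c)) (leq_lyapunov N lam ((1 - \<sigma>) / 4))
    \<le> leq_lyapunov N lam ((1 - \<sigma>) / 4) (Q, V, c) - (1 - \<sigma>) / 2"
proof -
  define \<kappa> where "\<kappa> = (1 - \<sigma>) / 4"
  define W where "W = (if s \<noteq> c then deficit lam Q V s else 0)"
  have lam: "0 \<le> lam j \<and> lam j \<le> 1" if "j \<in> {1..N}" for j
    using lam0 that member_le_sum[of j "{1..N}" lam] \<sigma> by force
  have "0 \<le> \<sigma>" unfolding \<sigma>(1) using lam0 by (intro sum_nonneg) auto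
  have "0 < \<kappa>" using \<sigma>(2) by (simp add: \<kappa>_def)
  have expectation: "measure_pmf.expectation (leq_kernel N lam (Q, V, c)) (leq_lyapunov N lam \<kappa>)
      \<le> leq_lyapunov N lam \<kappa> (Q, V, c) - (if 0 < Q s then 1 else 0) + \<sigma> + \<kappa> * (1 + \<sigma>) - \<kappa> * W"
    using expectation_leq_lyapunov_le[OF assms(1) inv lam _ s] \<open>0 < \<kappa>\<close> by (simp add: \<sigma>(1) W_def)
  have "\<kappa> * (1 + \<sigma>) \<le> \<kappa> * 2"
    using \<open>0 < \<kappa>\<close> \<sigma>(2) by (intro mult_left_mono) auto
  then have small_growth: "\<kappa> * (1 + \<sigma>) \<le> (1 - \<sigma>) / 2"
    by (simp add: \<kappa>_def)
  have "0 \<le> \<kappa> * W"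
    using \<open>0 < \<kappa>\<close> by (simp add: W_def deficit_def)
  have "(1 - \<sigma>) / 2 \<le> (if 0 < Q s then 1 else 0) - \<sigma> - \<kappa> * (1 + \<sigma>) + \<kappa> * W"
  proof (cases "0 < Q s")
    case True
    then show ?thesis using small_growth \<open>0 \<le> \<kappa> * W\<close> by simp
  next
    case False
    then have big: "4 / \<kappa> < lam s * real (V s)"
      using busy by (simp add: \<kappa>_def)
    have "1 \<le> 4 / \<kappa>"
      using \<open>0 < \<kappa>\<close> \<open>0 \<le> \<sigma>\<close> by (simp add: \<kappa>_def)
    then have heavy: "1 < lam s * real (V s)"
      using big by linarith
    have lam1: "lam j \<le> 1" if "j \<in> {1..N}" for j
      using lam[OF that] by simp
    have "W = lam s * real (V s)"
      using leq_sched_empty_heavy[OF assms(1) inv lam1 s _ heavy] False by (simp add: W_def)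
    then have "4 < \<kappa> * W"
      using big \<open>0 < \<kappa>\<close> by (simp add: field_simps)
    then show ?thesis using False small_growth \<open>0 \<le> \<sigma>\<close> \<sigma>(2) by simp
  qed
  then show ?thesis
    unfolding \<kappa>_def[symmetric] using expectation by linarith
qed

definition leq_idle :: "nat \<Rightarrow> (nat \<Rightarrow> real) \<Rightarrow> real \<Rightarrow> qstate set" where
  "leq_idle N lam M = {(Q, V, c). leq_inv N (Q, V, c) \<and> Q (leq_sched N lam (Q, V, c)) = 0 \<and>
     lam (leq_sched N lam (Q, V, c)) * real (V (leq_sched N lam (Q, V, c))) \<le> M}"

lemma finite_leq_idle:
  assumes "N \<ge> 1" and pos: "\<And>j. j \<in> {1..N} \<Longrightarrow> 0 < lam j"
  shows "finite (leq_idle N lam M)"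
proof -
  define B where "B j = nat \<lceil>M / lam j\<rceil>" for j
  have "leq_idle N lam M
    \<subseteq> PiE_dflt {1..N} 0 (\<lambda>j. {..B j + 1}) \<times> PiE_dflt {1..N} 0 (\<lambda>j. {..B j}) \<times> {..N}"
  proof
    fix st assume "st \<in> leq_idle N lam M"
    moreover obtain Q V c where st: "st = (Q, V, c)" by (cases st)
    ultimately have idle: "(Q, V, c) \<in> leq_idle N lam M" by simp
    define s where "s = leq_sched N lam (Q, V, c)"
    have inv: "leq_inv N (Q, V, c)" and "Q s = 0" and "lam s * real (V s) \<le> M"
      using idle by (simp_all add: leq_idle_def s_def)
    have "s = leq_argmax N lam V"
      unfolding s_def by (rule leq_sched_empty) (use \<open>Q s = 0\<close> in \<open>simp add: s_def\<close>)
    have V_le: "V j \<le> B j" if "j \<in> {1..N}" for j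
    proof -
      have "lam j * real (V j) \<le> M"
        using leq_argmax(2)[where lam=lam and V=V, OF assms(1) that] \<open>s = leq_argmax N lam V\<close>
          \<open>lam s * real (V s) \<le> M\<close>
        by simp
      then have "real (V j) \<le> M / lam j" using pos[OF that] by (simp add: field_simps)
      then show ?thesis unfolding B_def by linarith
    qed
    have Q_le: "Q j \<le> B j + 1" if "j \<in> {1..N}" for j
    proof (cases "j = c")
      case True
      then have "Q j = 0"
        using leq_sched_incumbent[of c N Q lam V] that \<open>Q s = 0\<close> by (fastforce simp: s_def)
      then show ?thesis by simp
    next
      case False
      then have "Q j \<le> V j + 1" using inv that by (simp add: leq_inv_def)
      then show ?thesis using V_le[OF that] by simp
    qed
    show "st \<in> PiE_dflt {1..N} 0 (\<lambda>j. {..B j + 1}) \<times> PiE_dflt {1..N} 0 (\<lambda>j. {..B j}) \<times> {..N}"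
      unfolding st using inv V_le Q_le by (auto simp: PiE_dflt_def leq_inv_def)
  qed
  then show ?thesis by (rule finite_subset) auto
qed

theorem proposition2:
  fixes N :: nat and lam :: "nat \<Rightarrow> real"
  assumes "N \<ge> 1"
    and "\<forall>i\<in>{1..N}. lam i \<ge> 0"
    and "(\<Sum>i=1..N. lam i) < 1"
    and "Min (lam ` {1..N}) > 0"
  shows "leq_stable N lam"
proof -
  define \<sigma> where "\<sigma> = (\<Sum>i=1..N. lam i)"
  have pos: "0 < lam j" if "j \<in> {1..N}" for j
    using assms(1,4) that by simp
  interpret finite_support_kernel "leq_kernel N lam"
    by unfold_locales (simp add: leq_kernel_eq_map finite_set_pmf_arrivals)
  show ?thesis
    unfolding leq_stable_def
  proof (rule positive_recurrent_chain_if_drift)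
    show "y \<in> Collect (leq_inv N)"
      if "x \<in> Collect (leq_inv N)" "y \<in> set_pmf (leq_kernel N lam x)" for x y
      using leq_inv_kernel[OF assms(1)] that by blast
    show "set_pmf (leq_init N lam) \<subseteq> Collect (leq_inv N)"
      using leq_inv_init by blast
    show "finite (leq_idle N lam (16 / (1 - \<sigma>)))"
      using finite_leq_idle[OF assms(1) pos] .
    show "0 \<le> leq_lyapunov N lam ((1 - \<sigma>) / 4) x" for x
      using assms(3) by (simp add: leq_lyapunov_nonneg \<sigma>_def)
    show "0 < (1 - \<sigma>) / 2"
      using assms(3) by (simp add: \<sigma>_def)
    show "measure_pmf.expectation (leq_kernel N lam x) (leq_lyapunov N lam ((1 - \<sigma>) / 4))
        \<le> leq_lyapunov N lam ((1 - \<sigma>) / 4) x - (1 - \<sigma>) / 2"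
      if "x \<in> Collect (leq_inv N)" "x \<notin> leq_idle N lam (16 / (1 - \<sigma>))" for x
      using that leq_lyapunov_drift[OF assms(1) _ _ \<sigma>_def] assms(2,3)
      by (cases x) (auto simp: leq_idle_def \<sigma>_def not_le)
  qed
qed

end
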